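(* Let $P\subseteq\mathbb{C}$ be a finitely generated field extension of $\mathbb{Q}$, $q$ a prime, and $\epsilon$ a root of unity of order $q$. If $a\in P$ is $q$-simple in $P$, then $a$ is $q$-simple in $P(\epsilon)$.
   Context: $\mu$ is the group of all roots of unity in $\mathbb{C}^\times$. For a field $K\subseteq\mathbb{C}$ and integer $k>1$, a nonzero $a\in K$ is $k$-simple in $K$ if $a\notin\mu$ and for all $b\in K$, $\epsilon\in\mu$ and integers $d$, $a^d=b^k\epsilon$ implies $k\mid d$. *)

theory Defs
  imports Complex_Main "HOL-Computational_Algebra.Primes"
begin

definition is_subfield :: "complex set \<Rightarrow> bool" where
  "is_subfield K \<longleftrightarrow> 0 \<in> K \<and> 1 \<in> K \<and>
     (\<forall>x\<in>K. \<forall>y\<in>K. x + y \<in> K \<and> x * y \<in> K) \<and>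
     (\<forall>x\<in>K. - x \<in> K) \<and> (\<forall>x\<in>K. x \<noteq> 0 \<longrightarrow> inverse x \<in> K)"

definition gen_field :: "complex set \<Rightarrow> complex set" where
  "gen_field S = \<Inter> {K. is_subfield K \<and> S \<subseteq> K}"

definition fin_gen_field :: "complex set \<Rightarrow> bool" where
  "fin_gen_field P \<longleftrightarrow> (\<exists>S. finite S \<and> P = gen_field S)"

definition adjoin :: "complex set \<Rightarrow> complex \<Rightarrow> complex set" where
  "adjoin P e = gen_field (insert e P)"

definition roots_of_unity :: "complex set" where
  "roots_of_unity = {z. \<exists>n::nat. n > 0 \<and> z ^ n = 1}"

definition root_of_unity_order :: "complex \<Rightarrow> nat \<Rightarrow> bool" where
  "root_of_unity_order e n \<longleftrightarrow> n > 0 \<and> e ^ n = 1 \<and> (\<forall>m. 0 < m \<and> m < n \<longrightarrow> e ^ m \<noteq> 1)"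

definition k_simple :: "nat \<Rightarrow> complex set \<Rightarrow> complex \<Rightarrow> bool" where
  "k_simple k K a \<longleftrightarrow> a \<in> K \<and> a \<noteq> 0 \<and> a \<notin> roots_of_unity \<and>
     (\<forall>b\<in>K. \<forall>e\<in>roots_of_unity. \<forall>d::int. a powi d = b ^ k * e \<longrightarrow> int k dvd d)"

end

theory Submission
  imports Defs "HOL-Algebra.Finite_Extensions" "HOL-Computational_Algebra.Fundamental_Theorem_Algebra"
begin

(* Suppose a^d = b^q \<epsilon> with b \<in> P(e), \<epsilon> a root of unity and q not dividing d.
   Bezout turns this into a = c^q \<epsilon>' with c \<in> P(e), so c^(qm) = a^m \<in> P for some m > 0.
   Hence every conjugate of c over P is c times a root of unity, and the constant coefficient
   of the minimal polynomial of c is an element u = c^r \<zeta> of P, where r = [P(c):P] satisfies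
   0 < r \<le> [P(e):P] < q. Then a^r = u^q \<delta> with \<delta> a root of unity, contradicting
   q-simplicity of a in P. *)

hide_const (open) Divisibility.prime

context domain
begin

lemma degree_Irr_le_of_root:
  assumes K: "subfield K R" and p: "p \<in> carrier (K[X])" "p \<noteq> []"
    and x: "x \<in> carrier R" "eval p x = \<zero>"
  shows "(algebraic over K) x" and "Polynomials.degree (Irr K x) \<le> Polynomials.degree p"
proof -
  show alg: "(algebraic over K) x"
    using algebraicI[OF p x(2)] .
  have "Irr K x pdivides p"
    using Irr_minimal[OF K x(1) alg p(1) x(2)] .
  then show "Polynomials.degree (Irr K x) \<le> Polynomials.degree p"
    using pdivides_imp_degree_le[OF subfieldE(1)[OF K] IrrE(1)[OF K x(1) alg] p] by blast
qed

lemma degree_Irr_le_of_mem_simple_extension: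
  assumes K: "subfield K R" and x: "x \<in> carrier R" "(algebraic over K) x"
    and y: "y \<in> simple_extension K x"
  shows "(algebraic over K) y" and "Polynomials.degree (Irr K y) \<le> Polynomials.degree (Irr K x)"
proof -
  have sub: "subring (simple_extension K x) R"
    using simple_extension_is_subring[OF subfieldE(1)[OF K] x(1)] .
  have yR: "y \<in> carrier R"
    using y subringE(1)[OF sub] by blast
  show alg: "(algebraic over K) y"
    using simple_extesion_mem_imp_algebraic[OF K x y] .
  have "simple_extension K y \<subseteq> simple_extension K x"
    using simple_extension_subring_incl[OF sub simple_extension_incl[OF subfieldE(3)[OF K] x(1)] y] .
  moreover have "set (exp_base y (Polynomials.degree (Irr K y))) \<subseteq> simple_extension K y"
    using Span_base_incl[OF K exp_base_closed[OF yR]] Span_exp_base[OF K yR alg] by metis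
  ultimately have "length (exp_base y (Polynomials.degree (Irr K y))) \<le> Polynomials.degree (Irr K x)"
    using independent_length_le_dimension[OF K dimension_simple_extension[OF K x]
        exp_base_independent[OF K yR alg]] by blast
  then show "Polynomials.degree (Irr K y) \<le> Polynomials.degree (Irr K x)"
    by (simp add: exp_base_def)
qed

end

definition complex_ring :: "complex ring" where
  "complex_ring = \<lparr>carrier = UNIV, monoid.mult = (*), one = 1, zero = 0, add = (+)\<rparr>"

lemma complex_ring_simps [simp]:
  "carrier complex_ring = UNIV" "monoid.mult complex_ring = (*)" "one complex_ring = 1"
  "zero complex_ring = 0" "add complex_ring = (+)"
  by (simp_all add: complex_ring_def)

lemma field_complex_ring: "field complex_ring"
proof -
  have "\<exists>y. x + y = 0" for x :: complex
    using add.right_inverse by blast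
  moreover have "x \<noteq> 0 \<Longrightarrow> \<exists>y. x * y = 1" for x :: complex
    by (rule exI[of _ "inverse x"]) auto
  ultimately show ?thesis
    unfolding complex_ring_def by unfold_locales (auto simp: algebra_simps Units_def)
qed

interpretation complex_ring: domain complex_ring
  using field_complex_ring by (rule field.axioms(1))

lemma complex_ring_a_inv [simp]: "a_inv complex_ring x = - x"
  by (rule complex_ring.add.inv_equality) auto

lemma complex_ring_pow [simp]: "pow complex_ring x n = x ^ n"
  by (induct n) (auto simp: complex_ring.nat_pow_Suc mult.commute)

lemma complex_ring_m_inv [simp]: "x \<noteq> 0 \<Longrightarrow> m_inv complex_ring x = inverse x"
  by (intro complex_ring.inv_char) auto

lemma is_subfield_iff_subfield: "is_subfield K \<longleftrightarrow> subfield K complex_ring"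
proof
  assume "is_subfield K"
  then show "subfield K complex_ring"
    unfolding is_subfield_def
    by (intro field.subfieldI'[OF field_complex_ring] complex_ring.subringI) auto
next
  assume K: "subfield K complex_ring"
  have "inverse k \<in> K" if "k \<in> K" "k \<noteq> 0" for k
    using complex_ring.subfield_m_inv(1)[OF K, of k] that by auto
  then show "is_subfield K"
    using subringE[OF subfieldE(1)[OF K]] unfolding is_subfield_def by auto
qed

(* HOL-Algebra lists coefficients from the leading one down, Poly from the constant one up. *)
lemma complex_ring_eval_Poly: "complex_ring.eval l x = poly (Poly (rev l)) x"
  by (induct l) (auto simp: Poly_snoc poly_monom)

lemma Poly_rev_monic:
  fixes l :: "'a :: comm_semiring_1 list"
  assumes "l \<noteq> []" "hd l = 1"
  shows "Polynomial.lead_coeff (Poly (rev l)) = 1"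
    and "Polynomial.degree (Poly (rev l)) = length l - 1"
    and "poly (Poly (rev l)) 0 = last l"
proof -
  have coeffs: "coeffs (Poly (rev l)) = rev l"
    using assms by (cases l) (simp_all add: strip_while_def)
  then show "Polynomial.degree (Poly (rev l)) = length l - 1"
    by (simp add: degree_eq_length_coeffs)
  have "Poly (rev l) \<noteq> 0"
    using coeffs assms(1) by (metis coeffs_eq_Nil rev_is_Nil_conv)
  then show "Polynomial.lead_coeff (Poly (rev l)) = 1"
    using coeffs assms by (metis last_coeffs_eq_coeff_degree last_rev)
  show "poly (Poly (rev l)) 0 = last l"
    using assms by (simp add: poly_0_coeff_0 nth_default_def last_conv_nth rev_nth)
qed

lemma complex_ring_eval_replicate_one: "complex_ring.eval (replicate n 1) x = (\<Sum>i<n. x ^ i)"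
  by (induct n) auto

lemma complex_ring_eval_replicate_zero_append:
  "complex_ring.eval (replicate n 0 @ l) x = complex_ring.eval l x"
  by (induct n) auto

lemma gen_field_minimal: "is_subfield K \<Longrightarrow> S \<subseteq> K \<Longrightarrow> gen_field S \<subseteq> K"
  unfolding gen_field_def by blast

lemma gen_field_superset: "S \<subseteq> gen_field S"
  unfolding gen_field_def by blast

lemma is_subfield_gen_field: "is_subfield (gen_field S)"
  unfolding gen_field_def is_subfield_def by blast

lemma is_subfield_power: "is_subfield K \<Longrightarrow> x \<in> K \<Longrightarrow> x ^ n \<in> K"
  by (induct n) (auto simp: is_subfield_def)

lemma is_subfield_power_int: "is_subfield K \<Longrightarrow> x \<in> K \<Longrightarrow> x powi n \<in> K"
proof -
  assume K: "is_subfield K" and x: "x \<in> K"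
  have "inverse x \<in> K"
    using K x by (cases "x = 0") (auto simp: is_subfield_def)
  then show ?thesis
    using K x by (auto simp: power_int_def is_subfield_power)
qed

lemma roots_of_unity_nonzero: "x \<in> roots_of_unity \<Longrightarrow> x \<noteq> 0"
  unfolding roots_of_unity_def by (auto simp: zero_power)

lemma one_in_roots_of_unity: "1 \<in> roots_of_unity"
  unfolding roots_of_unity_def by auto

lemma roots_of_unity_mult: "x \<in> roots_of_unity \<Longrightarrow> y \<in> roots_of_unity \<Longrightarrow> x * y \<in> roots_of_unity"
proof -
  assume "x \<in> roots_of_unity" "y \<in> roots_of_unity"
  then obtain n m where n: "n > 0" "x ^ n = 1" and m: "m > 0" "y ^ m = 1"
    unfolding roots_of_unity_def by auto
  have "x ^ (n * m) = 1"
    using n(2) by (simp add: power_mult)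
  moreover have "y ^ (n * m) = 1"
    using m(2) by (simp add: power_mult mult.commute[of n m])
  ultimately have "(x * y) ^ (n * m) = 1"
    by (simp add: power_mult_distrib)
  with n(1) m(1) show ?thesis
    unfolding roots_of_unity_def by (auto intro!: exI[of _ "n * m"])
qed

lemma roots_of_unity_power: "x \<in> roots_of_unity \<Longrightarrow> x ^ k \<in> roots_of_unity"
  by (induct k) (auto intro: roots_of_unity_mult simp: one_in_roots_of_unity)

lemma roots_of_unity_inverse: "x \<in> roots_of_unity \<Longrightarrow> inverse x \<in> roots_of_unity"
  unfolding roots_of_unity_def by (auto simp: power_inverse)

lemma roots_of_unity_power_int: "x \<in> roots_of_unity \<Longrightarrow> x powi k \<in> roots_of_unity"
  by (simp add: power_int_def roots_of_unity_power roots_of_unity_inverse)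

lemma roots_of_unity_prod_mset:
  "(\<And>x. x \<in># M \<Longrightarrow> f x \<in> roots_of_unity) \<Longrightarrow> (\<Prod>x\<in>#M. f x) \<in> roots_of_unity"
  by (induct M) (auto intro: roots_of_unity_mult simp: one_in_roots_of_unity)

lemma divide_in_roots_of_unity:
  "x ^ N = c ^ N \<Longrightarrow> c \<noteq> 0 \<Longrightarrow> N > 0 \<Longrightarrow> x / c \<in> roots_of_unity"
  unfolding roots_of_unity_def by (auto simp: power_divide)

lemma poly_0_eq_power_degree_times_root_of_unity:
  fixes F :: "complex poly"
  assumes monic: "Polynomial.lead_coeff F = 1" and "c \<noteq> 0" "N > 0"
    and roots: "\<And>x. poly F x = 0 \<Longrightarrow> x ^ N = c ^ N"
  shows "\<exists>\<zeta>\<in>roots_of_unity. poly F 0 = c ^ Polynomial.degree F * \<zeta>"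
proof
  have F_eq: "F = (\<Prod>x\<in>#proots F. [:- x, 1:])"
    using complex_poly_decompose_multiset[of F] monic by simp
  have "poly F 0 = (\<Prod>x\<in>#proots F. - x)"
    by (subst (1) F_eq) (simp add: poly_prod_mset)
  also have "\<dots> = (\<Prod>x\<in>#proots F. c * (- x / c))"
    using \<open>c \<noteq> 0\<close> by simp
  also have "\<dots> = c ^ Polynomial.degree F * (\<Prod>x\<in>#proots F. - x / c)"
    by (simp only: prod_mset.distrib prod_mset_constant size_proots_complex)
  finally show "poly F 0 = c ^ Polynomial.degree F * (\<Prod>x\<in>#proots F. - x / c)" .
  have "- x / c \<in> roots_of_unity" if "x \<in># proots F" for x
  proof -
    have "F \<noteq> 0"
      using monic by auto
    then have "poly F x = 0"
      using that by simp
    then have "x / c \<in> roots_of_unity"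
      using roots divide_in_roots_of_unity \<open>c \<noteq> 0\<close> \<open>N > 0\<close> by blast
    moreover have "- 1 \<in> roots_of_unity"
      unfolding roots_of_unity_def by (intro CollectI exI[of _ 2]) simp
    ultimately show ?thesis
      using roots_of_unity_mult by fastforce
  qed
  then show "(\<Prod>x\<in>#proots F. - x / c) \<in> roots_of_unity"
    by (rule roots_of_unity_prod_mset)
qed

lemma conjugate_power_eq:
  assumes P: "is_subfield P" and alg: "(complex_ring.algebraic over P) c"
    and "N > 0" "c ^ N \<in> P" and z: "complex_ring.eval (complex_ring.Irr P c) z = 0"
  shows "z ^ N = c ^ N"
proof -
  have sP: "subfield P complex_ring"
    using P is_subfield_iff_subfield by blast
  define g where "g = 1 # replicate (N - 1) 0 @ [- (c ^ N)]"
  have g: "g \<in> carrier (P[X]\<^bsub>complex_ring\<^esub>)"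
    unfolding sym[OF univ_poly_carrier] polynomial_def g_def
    using P \<open>c ^ N \<in> P\<close> by (auto simp: is_subfield_def)
  have eval_g: "complex_ring.eval g x = x ^ N - c ^ N" for x
    using \<open>N > 0\<close> by (simp add: g_def complex_ring_eval_replicate_zero_append)
  have "complex_ring.Irr P c pdivides\<^bsub>complex_ring\<^esub> g"
    using complex_ring.Irr_minimal[OF sP _ alg g] eval_g by simp
  moreover have "complex_ring.Irr P c \<in> carrier (poly_ring complex_ring)"
    using complex_ring.carrier_polynomial_shell[OF subfieldE(1)[OF sP] complex_ring.IrrE(1)[OF sP _ alg]]
    by simp
  ultimately show ?thesis
    using complex_ring.pdivides_imp_root_sharing[of _ g z] z eval_g by auto
qed

lemma power_degree_Irr_in_field_up_to_root_of_unity: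
  assumes P: "is_subfield P" and alg: "(complex_ring.algebraic over P) c"
    and "c \<noteq> 0" "N > 0" "c ^ N \<in> P"
  shows "\<exists>u\<in>P. \<exists>\<zeta>\<in>roots_of_unity. u = c ^ Polynomials.degree (complex_ring.Irr P c) * \<zeta>"
proof -
  have sP: "subfield P complex_ring"
    using P is_subfield_iff_subfield by blast
  define l where "l = complex_ring.Irr P c"
  have l: "l \<in> carrier (P[X]\<^bsub>complex_ring\<^esub>)" "pirreducible\<^bsub>complex_ring\<^esub> P l" "hd l = 1"
    using complex_ring.IrrE[OF sP _ alg] unfolding l_def by auto
  have "l \<noteq> []"
    using l(2) unfolding ring_irreducible_def by (simp add: univ_poly_zero)
  have "last l \<in> P"
    using l(1) \<open>l \<noteq> []\<close> unfolding sym[OF univ_poly_carrier] polynomial_def by auto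
  define F where "F = Poly (rev l)"
  have F: "Polynomial.lead_coeff F = 1" "Polynomial.degree F = Polynomials.degree l" "poly F 0 = last l"
    using Poly_rev_monic[OF \<open>l \<noteq> []\<close> l(3)] unfolding F_def by auto
  have "x ^ N = c ^ N" if "poly F x = 0" for x
    using conjugate_power_eq[OF P alg \<open>N > 0\<close> \<open>c ^ N \<in> P\<close>] that
    unfolding F_def l_def complex_ring_eval_Poly by blast
  then obtain \<zeta> where "\<zeta> \<in> roots_of_unity" "poly F 0 = c ^ Polynomial.degree F * \<zeta>"
    using poly_0_eq_power_degree_times_root_of_unity[OF F(1) \<open>c \<noteq> 0\<close> \<open>N > 0\<close>] by blast
  with F \<open>last l \<in> P\<close> show ?thesis
    unfolding l_def by metis
qed

lemma degree_Irr_le_of_root_of_unity: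
  assumes P: "is_subfield P" and "q > 0" "e ^ q = 1" "e \<noteq> 1"
  shows "(complex_ring.algebraic over P) e"
    and "Polynomials.degree (complex_ring.Irr P e) \<le> q - 1"
proof -
  have sP: "subfield P complex_ring"
    using P is_subfield_iff_subfield by blast
  have geometric_sum: "replicate q 1 \<in> carrier (P[X]\<^bsub>complex_ring\<^esub>)"
    unfolding sym[OF univ_poly_carrier] polynomial_def
    using P \<open>q > 0\<close> by (cases q) (auto simp: is_subfield_def)
  have "(e - 1) * (\<Sum>i<q. e ^ i) = 0"
    using \<open>e ^ q = 1\<close> power_diff_1_eq[of e q] by simp
  then have "complex_ring.eval (replicate q 1) e = 0"
    using \<open>e \<noteq> 1\<close> by (simp add: complex_ring_eval_replicate_one)
  then show "(complex_ring.algebraic over P) e"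
    and "Polynomials.degree (complex_ring.Irr P e) \<le> q - 1"
    using complex_ring.degree_Irr_le_of_root[OF sP geometric_sum] \<open>q > 0\<close> by auto
qed

lemma degree_Irr_lt_of_mem_adjoin_root_of_unity:
  assumes P: "is_subfield P" and e: "q > 0" "e ^ q = 1" "e \<noteq> 1" and c: "c \<in> adjoin P e"
  shows "(complex_ring.algebraic over P) c"
    and "Polynomials.degree (complex_ring.Irr P c) < q"
proof -
  have sP: "subfield P complex_ring"
    using P is_subfield_iff_subfield by blast
  note alg_e = degree_Irr_le_of_root_of_unity[OF P e]
  have "is_subfield (complex_ring.simple_extension P e)"
    using complex_ring.simple_extension_is_subfield[OF sP] alg_e(1) is_subfield_iff_subfield by simp
  moreover have "insert e P \<subseteq> complex_ring.simple_extension P e"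
    using complex_ring.simple_extension_incl[of P e] complex_ring.simple_extension_mem[OF subfieldE(1)[OF sP], of e]
    by auto
  ultimately have "c \<in> complex_ring.simple_extension P e"
    using c gen_field_minimal unfolding adjoin_def by blast
  then show "(complex_ring.algebraic over P) c"
    and "Polynomials.degree (complex_ring.Irr P c) < q"
    using complex_ring.degree_Irr_le_of_mem_simple_extension[OF sP _ alg_e(1)] alg_e(2) \<open>q > 0\<close>
    by force+
qed

lemma kth_power_up_to_root_of_unity_of_coprime_exponent:
  assumes K: "is_subfield K" and "a \<in> K" "b \<in> K" "a \<noteq> 0" "\<epsilon> \<in> roots_of_unity"
    and "coprime (int k) d" and a_d: "a powi d = b ^ k * \<epsilon>"
  shows "\<exists>c\<in>K. \<exists>\<epsilon>'\<in>roots_of_unity. a = c ^ k * \<epsilon>'"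
proof -
  obtain s t where st: "s * d + t * int k = 1"
    using bezout_int[of d "int k"] \<open>coprime (int k) d\<close>
    by (metis coprime_commute coprime_iff_gcd_eq_1)
  have "a = a powi (s * d) * a powi (t * int k)"
    using \<open>a \<noteq> 0\<close> st by (metis power_int_1_right power_int_add)
  also have "a powi (s * d) = (b ^ k) powi s * \<epsilon> powi s"
    by (metis a_d power_int_mult mult.commute power_int_mult_distrib)
  also have "(b ^ k) powi s = (b powi s) ^ k"
    by (metis power_int_power power_int_power' mult.commute)
  also have "a powi (t * int k) = (a powi t) ^ k"
    by (rule power_int_power'[symmetric])
  finally have "a = (b powi s * a powi t) ^ k * \<epsilon> powi s"
    by (simp add: power_mult_distrib mult_ac)
  moreover have "b powi s * a powi t \<in> K"
    using K \<open>a \<in> K\<close> \<open>b \<in> K\<close> is_subfield_power_int[OF K] by (auto simp: is_subfield_def)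
  ultimately show ?thesis
    using roots_of_unity_power_int[OF \<open>\<epsilon> \<in> roots_of_unity\<close>] by blast
qed

lemma k_simple_neq_kth_power_of_small_degree:
  assumes P: "is_subfield P" and "prime q" and a: "k_simple q P a"
    and alg: "(complex_ring.algebraic over P) c" "Polynomials.degree (complex_ring.Irr P c) < q"
    and "\<epsilon> \<in> roots_of_unity"
  shows "a \<noteq> c ^ q * \<epsilon>"
proof
  assume a_c: "a = c ^ q * \<epsilon>"
  have "a \<in> P" "a \<noteq> 0"
    and simple: "\<And>u \<delta> r. u \<in> P \<Longrightarrow> \<delta> \<in> roots_of_unity \<Longrightarrow> a powi r = u ^ q * \<delta> \<Longrightarrow> int q dvd r"
    using a unfolding k_simple_def by auto
  obtain m where "m > 0" "\<epsilon> ^ m = 1"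
    using \<open>\<epsilon> \<in> roots_of_unity\<close> unfolding roots_of_unity_def by auto
  then have "c ^ (q * m) = a ^ m"
    unfolding a_c by (simp add: power_mult power_mult_distrib)
  then have "c ^ (q * m) \<in> P"
    using is_subfield_power[OF P \<open>a \<in> P\<close>] by simp
  moreover have "c \<noteq> 0"
    using a_c \<open>a \<noteq> 0\<close> prime_gt_0_nat[OF \<open>prime q\<close>] by auto
  moreover have "q * m > 0"
    using \<open>m > 0\<close> \<open>prime q\<close> prime_gt_0_nat by simp
  ultimately obtain u \<zeta> where u: "u \<in> P" "\<zeta> \<in> roots_of_unity"
    and u_c: "u = c ^ Polynomials.degree (complex_ring.Irr P c) * \<zeta>"
    using power_degree_Irr_in_field_up_to_root_of_unity[OF P alg(1)] by blast
  define r where "r = Polynomials.degree (complex_ring.Irr P c)"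
  have "1 \<le> r"
    using complex_ring.pirreducible_degree complex_ring.IrrE(1,2) alg(1) P
    unfolding r_def is_subfield_iff_subfield by simp
  have "a ^ r = (c ^ r) ^ q * \<epsilon> ^ r"
    unfolding a_c power_mult_distrib by (simp only: power_mult[symmetric] mult.commute)
  also have "c ^ r = u / \<zeta>"
    using u_c roots_of_unity_nonzero[OF u(2)] unfolding r_def by simp
  finally have a_r: "a ^ r = u ^ q * (\<epsilon> ^ r / \<zeta> ^ q)"
    by (simp add: power_divide)
  have "\<epsilon> ^ r / \<zeta> ^ q \<in> roots_of_unity"
    using \<open>\<epsilon> \<in> roots_of_unity\<close> u(2)
    by (simp add: divide_inverse roots_of_unity_mult roots_of_unity_power roots_of_unity_inverse)
  then have "q dvd r"
    using simple[OF u(1), of _ "int r"] a_r by simp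
  with \<open>1 \<le> r\<close> alg(2) show False
    unfolding r_def by (simp add: nat_dvd_not_less)
qed

lemma k_simple_in_extension_if_degree_Irr_lt:
  assumes P: "is_subfield P" and L: "is_subfield L" "P \<subseteq> L" and "prime q"
    and a: "k_simple q P a"
    and small_degree: "\<And>c. c \<in> L \<Longrightarrow>
      (complex_ring.algebraic over P) c \<and> Polynomials.degree (complex_ring.Irr P c) < q"
  shows "k_simple q L a"
proof -
  have "a \<in> P" "a \<noteq> 0" "a \<notin> roots_of_unity"
    using a unfolding k_simple_def by auto
  have "int q dvd d" if b: "b \<in> L" and \<epsilon>: "\<epsilon> \<in> roots_of_unity" and a_d: "a powi d = b ^ q * \<epsilon>"
    for b \<epsilon> d
  proof (rule ccontr)
    assume "\<not> int q dvd d"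
    then have "coprime (int q) d"
      using \<open>prime q\<close> by (intro prime_imp_coprime) auto
    then obtain c \<epsilon>' where "c \<in> L" "\<epsilon>' \<in> roots_of_unity" "a = c ^ q * \<epsilon>'"
      using kth_power_up_to_root_of_unity_of_coprime_exponent[OF L(1) _ b \<open>a \<noteq> 0\<close> \<epsilon> _ a_d]
        \<open>a \<in> P\<close> L(2) by blast
    then show False
      using k_simple_neq_kth_power_of_small_degree[OF P \<open>prime q\<close> a]
        small_degree by blast
  qed
  then show ?thesis
    using \<open>a \<in> P\<close> \<open>a \<noteq> 0\<close> \<open>a \<notin> roots_of_unity\<close> L(2) unfolding k_simple_def by blast
qed

theorem lemma2p9:
  fixes P :: "complex set" and q :: nat and e a :: complex
  assumes "is_subfield P" and "fin_gen_field P"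
    and "prime q"
    and "root_of_unity_order e q"
    and "k_simple q P a"
  shows "k_simple q (adjoin P e) a"
proof -
  have "q > 1"
    using \<open>prime q\<close> prime_gt_1_nat by blast
  then have e: "q > 0" "e ^ q = 1" "e \<noteq> 1"
    using \<open>root_of_unity_order e q\<close> unfolding root_of_unity_order_def by force+
  have "is_subfield (adjoin P e)" "P \<subseteq> adjoin P e"
    unfolding adjoin_def using is_subfield_gen_field gen_field_superset by blast+
  then show ?thesis
    using k_simple_in_extension_if_degree_Irr_lt[OF \<open>is_subfield P\<close> _ _ \<open>prime q\<close> \<open>k_simple q P a\<close>]
      degree_Irr_lt_of_mem_adjoin_root_of_unity[OF \<open>is_subfield P\<close> e]
    by blast
qed

end
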